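(* Consider the online block packing problem with $m$ resources of capacities $B_1,\dots,B_m>0$, and let $x^*=\{x_i^{*t}\}$ be the allocation produced by the greedy fractional algorithm. For every horizon $T\ge 1$ and every (possibly fractional) allocation $y=\{y_i^t\}$ (in particular the optimal offline one), $SW_{[1:T]}(x^* )\ge \tfrac12\, SW_{[1:T]}(y)$.
   Context: Online block packing: there are $m$ resources with block capacities $B_1,\dots,B_m>0$. A set $\mathcal{C}$ of transactions is given; each $i\in\mathcal{C}$ has an arrival time $a_i\in\{1,2,\dots\}$, base value $v_i\ge 0$, discount factor $\rho_i\in[0,1]$ and demand vector $w_i=(w_{i1},\dots,w_{im})\in\mathbb{R}_+^m$. Executing $i$ in block $t\ge a_i$ yields value $v_i^t:=v_i(1-\rho_i)^{t-a_i}$. A (fractional) allocation is a family $x=\{x_i^t\}_{i\in\mathcal{C},t\ge1}$ with $x_i^t\in[0,1]$, $x_i^t=0$ whenever $t<a_i$, $\sum_t x_i^t\le 1$ for all $i$, and $\sum_i w_{ij}x_i^t\le B_j$ for all blocks $t$ and resources $j$; it is integral if all $x_i^t\in\{0,1\}$. Its social welfare up to horizon $T$ is $SW_{[1:T]}(x)=\sum_{t=1}^T\sum_i x_i^t v_i^t$. The greedy fractional algorithm: at each time $t=1,2,\dots$ it sets $\{x_i^{*t}\}_i$ to be an optimal solution of the linear program maximizing $\sum_i x_i^{*t} v_i^t$ subject to $0\le x_i^{*t}\le 1-\sum_{\tau<t}x_i^{*\tau}$ for all $i$, $\sum_i w_{ij}x_i^{*t}\le B_j$ for all $j$, and $x_i^{*t}=0$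 for all $i$ with $a_i>t$. *)

theory Defs
  imports Complex_Main
begin

text \<open>Transactions have type 'a; the transaction set is C.  Arrival a, base value v, discount rho, demands w i j, capacities B j.
  Since every allocation vanishes before arrival, sums over transactions at time t are
  taken over the (finite) set of transactions of C that have arrived by time t.\<close>

definition arrived :: "'a set \<Rightarrow> ('a \<Rightarrow> nat) \<Rightarrow> nat \<Rightarrow> 'a set" where
  "arrived C a t = {i \<in> C. a i \<le> t}"

definition val :: "('a \<Rightarrow> nat) \<Rightarrow> ('a \<Rightarrow> real) \<Rightarrow> ('a \<Rightarrow> real) \<Rightarrow> 'a \<Rightarrow> nat \<Rightarrow> real" where
  "val a v rho i t = v i * (1 - rho i) ^ (t - a i)"

definition is_alloc ::
  "nat \<Rightarrow> (nat \<Rightarrow> real) \<Rightarrow> 'a set \<Rightarrow> ('a \<Rightarrow> nat) \<Rightarrow> ('a \<Rightarrow> nat \<Rightarrow> real)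
    \<Rightarrow> ('a \<Rightarrow> nat \<Rightarrow> real) \<Rightarrow> bool" where
  "is_alloc m B C a w x \<longleftrightarrow>
     (\<forall>i\<in>C. \<forall>t\<ge>1. 0 \<le> x i t \<and> x i t \<le> 1) \<and>
     (\<forall>i\<in>C. \<forall>t\<ge>1. t < a i \<longrightarrow> x i t = 0) \<and>
     (\<forall>i\<in>C. \<forall>n. (\<Sum>t=1..n. x i t) \<le> 1) \<and>
     (\<forall>t\<ge>1. \<forall>j<m. (\<Sum>i\<in>arrived C a t. w i j * x i t) \<le> B j)"

definition SW ::
  "'a set \<Rightarrow> ('a \<Rightarrow> nat) \<Rightarrow> ('a \<Rightarrow> real) \<Rightarrow> ('a \<Rightarrow> real) \<Rightarrow> ('a \<Rightarrow> nat \<Rightarrow> real) \<Rightarrow> nat \<Rightarrow> real" where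
  "SW C a v rho x T = (\<Sum>t=1..T. \<Sum>i\<in>arrived C a t. x i t * val a v rho i t)"

definition lp_feasible ::
  "nat \<Rightarrow> (nat \<Rightarrow> real) \<Rightarrow> 'a set \<Rightarrow> ('a \<Rightarrow> nat) \<Rightarrow> ('a \<Rightarrow> nat \<Rightarrow> real)
    \<Rightarrow> ('a \<Rightarrow> nat \<Rightarrow> real) \<Rightarrow> nat \<Rightarrow> ('a \<Rightarrow> real) \<Rightarrow> bool" where
  "lp_feasible m B C a w xs t z \<longleftrightarrow>
     (\<forall>i\<in>C. 0 \<le> z i \<and> z i \<le> 1 - (\<Sum>\<tau>\<in>{1..<t}. xs i \<tau>)) \<and>
     (\<forall>j<m. (\<Sum>i\<in>arrived C a t. w i j * z i) \<le> B j) \<and>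
     (\<forall>i\<in>C. t < a i \<longrightarrow> z i = 0)"

definition is_greedy ::
  "nat \<Rightarrow> (nat \<Rightarrow> real) \<Rightarrow> 'a set \<Rightarrow> ('a \<Rightarrow> nat) \<Rightarrow> ('a \<Rightarrow> real) \<Rightarrow> ('a \<Rightarrow> real)
    \<Rightarrow> ('a \<Rightarrow> nat \<Rightarrow> real) \<Rightarrow> ('a \<Rightarrow> nat \<Rightarrow> real) \<Rightarrow> bool" where
  "is_greedy m B C a v rho w xs \<longleftrightarrow>
     (\<forall>t\<ge>1. lp_feasible m B C a w xs t (\<lambda>i. xs i t) \<and>
        (\<forall>z. lp_feasible m B C a w xs t z \<longrightarrow>
           (\<Sum>i\<in>arrived C a t. z i * val a v rho i t)
             \<le> (\<Sum>i\<in>arrived C a t. xs i t * val a v rho i t)))"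

end

theory Submission
  imports Defs
begin

text \<open>Compare y with the greedy run xs block by block.  In block t, cap each y i t at
  the residual amount 1 - (\<Sum>\<tau><t. xs i \<tau>) that the greedy has not yet executed: the
  capped vector is feasible for the greedy LP, so its value is at most the greedy value of
  block t.  The part cut off (the excess) is positive only once the greedy has already executed
  part of the transaction, and its cumulative amount never exceeds what the greedy has executed
  so far.  Since values decay in time, Abel summation bounds the value of the excess by SW xs,
  whence SW y \<le> 2 SW xs.\<close>

lemma weighted_sum_le_of_prefix_sums_le:
  fixes e g f :: "nat \<Rightarrow> real"
  assumes "\<And>t. t \<le> T \<Longrightarrow> (\<Sum>s=1..t. e s) \<le> (\<Sum>s=1..t. g s)"
    and "\<And>s. 1 \<le> s \<Longrightarrow> s \<le> T \<Longrightarrow> 0 \<le> f s"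
    and "\<And>s u. 1 \<le> s \<Longrightarrow> s \<le> u \<Longrightarrow> u \<le> T \<Longrightarrow> f u \<le> f s"
  shows "(\<Sum>s=1..T. e s * f s) \<le> (\<Sum>s=1..T. g s * f s)"
  using assms
proof (induction T arbitrary: f)
  case 0
  then show ?case by simp
next
  case (Suc T)
  define f' where "f' s = f s - f (Suc T)" for s
  have IH: "(\<Sum>s=1..T. e s * f' s) \<le> (\<Sum>s=1..T. g s * f' s)"
    using Suc.prems by (intro Suc.IH) (auto simp: f'_def)
  have split: "(\<Sum>s=1..Suc T. h s * f s) = (\<Sum>s=1..T. h s * f' s) + f (Suc T) * (\<Sum>s=1..Suc T. h s)"
    for h :: "nat \<Rightarrow> real"
  proof -
    have "(\<Sum>s=1..Suc T. h s * f s) = (\<Sum>s=1..Suc T. h s * f' s + f (Suc T) * h s)"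
      by (intro sum.cong) (auto simp: f'_def algebra_simps)
    also have "\<dots> = (\<Sum>s=1..Suc T. h s * f' s) + f (Suc T) * (\<Sum>s=1..Suc T. h s)"
      by (simp only: sum.distrib sum_distrib_left)
    also have "(\<Sum>s=1..Suc T. h s * f' s) = (\<Sum>s=1..T. h s * f' s)"
      by (simp add: f'_def)
    finally show ?thesis .
  qed
  have "f (Suc T) * (\<Sum>s=1..Suc T. e s) \<le> f (Suc T) * (\<Sum>s=1..Suc T. g s)"
    using Suc.prems(1)[of "Suc T"] Suc.prems(2)[of "Suc T"] by (intro mult_left_mono) auto
  then show ?case
    unfolding split[of e] split[of g] using IH by linarith
qed

definition residual :: "(nat \<Rightarrow> real) \<Rightarrow> nat \<Rightarrow> real" where
  "residual x t = 1 - (\<Sum>\<tau>\<in>{1..<t}. x \<tau>)"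

definition excess :: "(nat \<Rightarrow> real) \<Rightarrow> (nat \<Rightarrow> real) \<Rightarrow> nat \<Rightarrow> real" where
  "excess x y t = max 0 (y t - residual x t)"

lemma residual_Suc: "residual x (Suc t) = 1 - (\<Sum>s=1..t. x s)"
  by (simp add: residual_def atLeastLessThanSuc_atLeastAtMost)

lemma residual_nonneg:
  assumes "\<And>n. (\<Sum>t=1..n. x t) \<le> 1"
  shows "0 \<le> residual x t"
proof (cases t)
  case (Suc n)
  then show ?thesis
    using assms[of n] by (simp add: residual_Suc)
qed (simp add: residual_def)

lemma excess_prefix_sum_le:
  fixes x y :: "nat \<Rightarrow> real"
  assumes x_nonneg: "\<And>t. 1 \<le> t \<Longrightarrow> 0 \<le> x t"
    and y_nonneg: "\<And>t. 1 \<le> t \<Longrightarrow> 0 \<le> y t"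
    and x_total: "\<And>n. (\<Sum>t=1..n. x t) \<le> 1"
    and y_total: "\<And>n. (\<Sum>t=1..n. y t) \<le> 1"
  shows "(\<Sum>s=1..n. excess x y s) \<le> (\<Sum>s=1..n. x s)"
proof -
  \<comment> \<open>Only the joint bound survives the induction step where the excess is positive.\<close>
  have "(\<Sum>s=1..n. excess x y s) \<le> (\<Sum>s=1..n. y s) \<and> (\<Sum>s=1..n. excess x y s) \<le> (\<Sum>s=1..n. x s)"
  proof (induction n)
    case 0
    then show ?case by simp
  next
    case (Suc n)
    have "0 \<le> residual x (Suc n)"
      using x_total by (rule residual_nonneg)
    then show ?case
      using Suc.IH y_total[of "Suc n"] x_nonneg[of "Suc n"] y_nonneg[of "Suc n"]
      by (auto simp: excess_def residual_Suc max_def)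
  qed
  then show ?thesis by blast
qed

lemma val_nonneg:
  assumes "0 \<le> v i" and "rho i \<le> 1"
  shows "0 \<le> val a v rho i t"
  using assms by (simp add: val_def)

lemma val_antimono:
  assumes "0 \<le> v i" and "0 \<le> rho i" and "rho i \<le> 1" and "s \<le> u"
  shows "val a v rho i u \<le> val a v rho i s"
proof -
  have "(1 - rho i) ^ (u - a i) \<le> (1 - rho i) ^ (s - a i)"
    by (rule power_decreasing) (use assms in auto)
  then show ?thesis
    unfolding val_def using assms(1) by (rule mult_left_mono)
qed

lemma SW_eq_sum_over_transactions:
  assumes fin: "\<forall>t. finite (arrived C a t)"
    and vanish: "\<And>i t. i \<in> C \<Longrightarrow> 1 \<le> t \<Longrightarrow> t < a i \<Longrightarrow> x i t = 0"
  shows "SW C a v rho x T = (\<Sum>i\<in>arrived C a T. \<Sum>t=1..T. x i t * val a v rho i t)"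
proof -
  have "SW C a v rho x T = (\<Sum>t=1..T. \<Sum>i\<in>arrived C a T. x i t * val a v rho i t)"
    unfolding SW_def
  proof (rule sum.cong[OF refl], rule sum.mono_neutral_left)
    fix t assume "t \<in> {1..T}"
    then show "arrived C a t \<subseteq> arrived C a T"
      and "\<forall>i\<in>arrived C a T - arrived C a t. x i t * val a v rho i t = 0"
      using vanish by (fastforce simp: arrived_def not_le)+
  qed (use fin in blast)
  also have "\<dots> = (\<Sum>i\<in>arrived C a T. \<Sum>t=1..T. x i t * val a v rho i t)"
    by (rule sum.swap)
  finally show ?thesis .
qed

lemma greedy_feasible:
  assumes "is_greedy m B C a v rho w xs" and "1 \<le> t"
  shows "lp_feasible m B C a w xs t (\<lambda>i. xs i t)"
  using assms unfolding is_greedy_def by blast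

lemma greedy_optimal:
  assumes "is_greedy m B C a v rho w xs" and "1 \<le> t" and "lp_feasible m B C a w xs t z"
  shows "(\<Sum>i\<in>arrived C a t. z i * val a v rho i t) \<le> (\<Sum>i\<in>arrived C a t. xs i t * val a v rho i t)"
  using assms unfolding is_greedy_def by blast

lemma greedy_nonneg:
  assumes "is_greedy m B C a v rho w xs" and "i \<in> C" and "1 \<le> t"
  shows "0 \<le> xs i t"
  using greedy_feasible[OF assms(1,3)] assms(2) unfolding lp_feasible_def by blast

lemma greedy_vanishes_before_arrival:
  assumes "is_greedy m B C a v rho w xs" and "i \<in> C" and "1 \<le> t" and "t < a i"
  shows "xs i t = 0"
  using greedy_feasible[OF assms(1,3)] assms(2,4) unfolding lp_feasible_def by blast

lemma greedy_total_le_1: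
  assumes "is_greedy m B C a v rho w xs" and "i \<in> C"
  shows "(\<Sum>t=1..n. xs i t) \<le> 1"
proof (cases n)
  case (Suc k)
  have "xs i (Suc k) \<le> residual (xs i) (Suc k)"
    using greedy_feasible[OF assms(1), of "Suc k"] assms(2)
    unfolding lp_feasible_def residual_def by simp
  then show ?thesis
    using Suc by (simp add: residual_Suc)
qed simp

lemma greedy_residual_nonneg:
  assumes "is_greedy m B C a v rho w xs" and "i \<in> C"
  shows "0 \<le> residual (xs i) t"
  using greedy_total_le_1[OF assms] by (rule residual_nonneg)

lemma lp_feasible_capped_alloc:
  assumes greedy: "is_greedy m B C a v rho w xs"
    and y: "is_alloc m B C a w y"
    and w_nonneg: "\<forall>i\<in>C. \<forall>j<m. w i j \<ge> 0"
    and t: "1 \<le> t"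
  shows "lp_feasible m B C a w xs t (\<lambda>i. min (y i t) (residual (xs i) t))"
  unfolding lp_feasible_def
proof (intro conjI ballI allI impI)
  fix i assume i: "i \<in> C"
  then show "0 \<le> min (y i t) (residual (xs i) t)"
    using y t greedy_residual_nonneg[OF greedy] unfolding is_alloc_def by auto
  show "min (y i t) (residual (xs i) t) \<le> 1 - (\<Sum>\<tau>\<in>{1..<t}. xs i \<tau>)"
    by (simp add: residual_def)
  assume "t < a i"
  then show "min (y i t) (residual (xs i) t) = 0"
    using i y t greedy_residual_nonneg[OF greedy i] unfolding is_alloc_def by auto
next
  fix j assume j: "j < m"
  have "(\<Sum>i\<in>arrived C a t. w i j * min (y i t) (residual (xs i) t))
      \<le> (\<Sum>i\<in>arrived C a t. w i j * y i t)"
    using w_nonneg j by (intro sum_mono mult_left_mono) (auto simp: arrived_def)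
  also have "\<dots> \<le> B j"
    using y t j unfolding is_alloc_def by blast
  finally show "(\<Sum>i\<in>arrived C a t. w i j * min (y i t) (residual (xs i) t)) \<le> B j" .
qed

lemma SW_le_greedy_plus_excess:
  assumes greedy: "is_greedy m B C a v rho w xs"
    and y: "is_alloc m B C a w y"
    and w_nonneg: "\<forall>i\<in>C. \<forall>j<m. w i j \<ge> 0"
  shows "SW C a v rho y T \<le> SW C a v rho xs T + SW C a v rho (\<lambda>i. excess (xs i) (y i)) T"
  unfolding SW_def sum.distrib[symmetric]
proof (rule sum_mono)
  fix t assume "t \<in> {1..T}"
  then have t: "1 \<le> t" by simp
  let ?val = "\<lambda>i. val a v rho i t"
  have "(\<Sum>i\<in>arrived C a t. y i t * ?val i)
      = (\<Sum>i\<in>arrived C a t. min (y i t) (residual (xs i) t) * ?val i)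
        + (\<Sum>i\<in>arrived C a t. excess (xs i) (y i) t * ?val i)"
    unfolding sum.distrib[symmetric]
    by (intro sum.cong refl) (auto simp: excess_def min_def max_def algebra_simps)
  also have "\<dots> \<le> (\<Sum>i\<in>arrived C a t. xs i t * ?val i)
        + (\<Sum>i\<in>arrived C a t. excess (xs i) (y i) t * ?val i)"
    using greedy_optimal[OF greedy t lp_feasible_capped_alloc[OF greedy y w_nonneg t]]
    by simp
  finally show "(\<Sum>i\<in>arrived C a t. y i t * ?val i)
      \<le> (\<Sum>i\<in>arrived C a t. xs i t * ?val i + excess (xs i) (y i) t * ?val i)"
    by (simp add: sum.distrib)
qed

lemma SW_excess_le_greedy:
  assumes greedy: "is_greedy m B C a v rho w xs"
    and y: "is_alloc m B C a w y"
    and fin: "\<forall>t. finite (arrived C a t)"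
    and v_nonneg: "\<forall>i\<in>C. v i \<ge> 0"
    and rho_01: "\<forall>i\<in>C. 0 \<le> rho i \<and> rho i \<le> 1"
  shows "SW C a v rho (\<lambda>i. excess (xs i) (y i)) T \<le> SW C a v rho xs T"
proof -
  have y_nonneg: "\<And>i t. i \<in> C \<Longrightarrow> 1 \<le> t \<Longrightarrow> 0 \<le> y i t"
    and y_vanish: "\<And>i t. i \<in> C \<Longrightarrow> 1 \<le> t \<Longrightarrow> t < a i \<Longrightarrow> y i t = 0"
    and y_total: "\<And>i n. i \<in> C \<Longrightarrow> (\<Sum>t=1..n. y i t) \<le> 1"
    using y unfolding is_alloc_def by auto
  have excess_vanish: "excess (xs i) (y i) t = 0" if "i \<in> C" "1 \<le> t" "t < a i" for i t
    using y_vanish[OF that] greedy_residual_nonneg[OF greedy \<open>i \<in> C\<close>, of t]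
    by (simp add: excess_def)
  have per_transaction: "(\<Sum>t=1..T. excess (xs i) (y i) t * val a v rho i t)
      \<le> (\<Sum>t=1..T. xs i t * val a v rho i t)" if i: "i \<in> C" for i
  proof (rule weighted_sum_le_of_prefix_sums_le)
    show "(\<Sum>s=1..t. excess (xs i) (y i) s) \<le> (\<Sum>s=1..t. xs i s)" for t
      using greedy_nonneg[OF greedy i] y_nonneg[OF i] greedy_total_le_1[OF greedy i] y_total[OF i]
      by (rule excess_prefix_sum_le)
    show "0 \<le> val a v rho i s" for s
      using v_nonneg rho_01 i by (intro val_nonneg) auto
    show "val a v rho i u \<le> val a v rho i s" if "s \<le> u" for s u
      using v_nonneg rho_01 i that by (intro val_antimono) auto
  qed
  have "SW C a v rho (\<lambda>i. excess (xs i) (y i)) T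
      = (\<Sum>i\<in>arrived C a T. \<Sum>t=1..T. excess (xs i) (y i) t * val a v rho i t)"
    using fin excess_vanish by (rule SW_eq_sum_over_transactions)
  also have "\<dots> \<le> (\<Sum>i\<in>arrived C a T. \<Sum>t=1..T. xs i t * val a v rho i t)"
    using per_transaction by (rule sum_mono) (auto simp: arrived_def)
  also have "\<dots> = SW C a v rho xs T"
    using fin greedy_vanishes_before_arrival[OF greedy]
    by (rule SW_eq_sum_over_transactions[symmetric])
  finally show ?thesis .
qed

theorem theorem1:
  fixes m :: nat and B :: "nat \<Rightarrow> real" and C :: "'a set"
    and a :: "'a \<Rightarrow> nat" and v rho :: "'a \<Rightarrow> real" and w :: "'a \<Rightarrow> nat \<Rightarrow> real"
    and xs y :: "'a \<Rightarrow> nat \<Rightarrow> real" and T :: nat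
  assumes B_pos: "\<forall>j<m. B j > 0"
    and arr: "\<forall>i\<in>C. a i \<ge> 1"
    and fin: "\<forall>t. finite (arrived C a t)"
    and v_nn: "\<forall>i\<in>C. v i \<ge> 0"
    and rho_01: "\<forall>i\<in>C. 0 \<le> rho i \<and> rho i \<le> 1"
    and w_nn: "\<forall>i\<in>C. \<forall>j<m. w i j \<ge> 0"
    and greedy: "is_greedy m B C a v rho w xs"
    and y_alloc: "is_alloc m B C a w y"
    and T: "T \<ge> 1"
  shows "SW C a v rho xs T \<ge> SW C a v rho y T / 2"
  using SW_le_greedy_plus_excess[OF greedy y_alloc w_nn, of T]
    SW_excess_le_greedy[OF greedy y_alloc fin v_nn rho_01, of T]
  by linarith

end
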